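(* There is a circuit with $O(n)$ generalized boolean gates and depth $O(\log n)$ that solves the generalized binary-to-unary conversion problem on $n$ receivers: given indicator bits $x[1],\dots,x[n]$ and an integer $\ell\in\{0,1,\dots,n\}$ in binary, it outputs bits $y[1],\dots,y[n]$ such that among the indices $i$ with $x[i]=1$, the first $\ell$ such indices (in increasing order) have $y[i]=1$ and all the others have $y[i]=0$ (indices with $x[i]=0$ may receive arbitrary bits).
   Context: A generalized boolean gate has constant fan-in and constant fan-out and computes an arbitrary fixed truth table. Depth is the longest input-to-output path length. *)

theory Defs
  imports Complex_Main
begin

text \<open>Wires 0..<m are the m circuit inputs;
the g-th gate (0-based) produces wire m+g.\<close>

datatype circuit = Circuit
  (c_inputs: nat)
  (c_gates: "(nat list \<times> (bool list \<Rightarrow> bool)) list")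
  (c_outputs: "nat list")

definition size_c :: "circuit \<Rightarrow> nat" where
  "size_c C = length (c_gates C)"

definition wf_circuit :: "circuit \<Rightarrow> bool" where
  "wf_circuit C \<longleftrightarrow>
     (\<forall>g < length (c_gates C). \<forall>p \<in> set (fst (c_gates C ! g)). p < c_inputs C + g) \<and>
     (\<forall>w \<in> set (c_outputs C). w < c_inputs C + length (c_gates C))"

definition max_fanin :: "circuit \<Rightarrow> nat \<Rightarrow> bool" where
  "max_fanin C c \<longleftrightarrow> (\<forall>gt \<in> set (c_gates C). length (fst gt) \<le> c)"

definition fanout :: "circuit \<Rightarrow> nat \<Rightarrow> nat" where
  "fanout C w = sum_list (map (\<lambda>gt. count_list (fst gt) w) (c_gates C)) + count_list (c_outputs C) w"

definition max_fanout :: "circuit \<Rightarrow> nat \<Rightarrow> bool" where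
  "max_fanout C c \<longleftrightarrow> (\<forall>w < c_inputs C + length (c_gates C). fanout C w \<le> c)"

definition wire_vals :: "circuit \<Rightarrow> bool list \<Rightarrow> bool list" where
  "wire_vals C inp = foldl (\<lambda>vs gt. vs @ [snd gt (map (\<lambda>p. vs ! p) (fst gt))]) inp (c_gates C)"

definition eval_circuit :: "circuit \<Rightarrow> bool list \<Rightarrow> bool list" where
  "eval_circuit C inp = map (\<lambda>w. wire_vals C inp ! w) (c_outputs C)"

text \<open>Depth of each wire: inputs have depth 0, a gate has depth 1 + max depth of the wires
it reads (so this is the length of the longest path ending at it; for gates with no inputs
it counts 1, an upper bound).\<close>
definition wire_depths :: "circuit \<Rightarrow> nat list" where
  "wire_depths C = foldl (\<lambda>ds gt. ds @ [Suc (Max (insert 0 (set (map (\<lambda>p. ds ! p) (fst gt)))))])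
                      (replicate (c_inputs C) 0) (c_gates C)"

definition depth_c :: "circuit \<Rightarrow> nat" where
  "depth_c C = Max (insert 0 (set (map (\<lambda>w. wire_depths C ! w) (c_outputs C))))"

definition nbits :: "nat \<Rightarrow> nat" where
  "nbits n = (LEAST k. n < 2 ^ k)"

text \<open>Input encoding: the n indicator bits, followed by the binary digits of l
(least significant first).\<close>
definition b2u_input :: "nat \<Rightarrow> bool list \<Rightarrow> nat \<Rightarrow> bool list" where
  "b2u_input n x l = x @ map (\<lambda>j. odd (l div 2 ^ j)) [0..<nbits n]"

definition solves_b2u :: "nat \<Rightarrow> circuit \<Rightarrow> bool" where
  "solves_b2u n C \<longleftrightarrow>
     c_inputs C = n + nbits n \<and> length (c_outputs C) = n \<and>
     (\<forall>x l. length x = n \<longrightarrow> l \<le> n \<longrightarrow>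
        (let y = eval_circuit C (b2u_input n x l) in
          \<forall>i < n. x ! i \<longrightarrow> (y ! i \<longleftrightarrow> card {j. j < i \<and> x ! j} < l)))"

end

theory Submission
  imports Defs
begin

text \<open>Arrange the receivers as the leaves of a complete binary tree of height
  \<open>L = nbits n\<close>. Bottom-up, every block of the tree computes in binary how many of its
  receivers are marked, by ripple-carry addition of the counts of its two halves. Top-down,
  every block computes its quota: \<open>l\<close> minus the number of marked receivers before the block.
  The left child inherits the quota of its parent, the right child subtracts the count of its
  left sibling by ripple-borrow subtraction. A block of \<open>2 ^ k\<close> receivers keeps only the
  low \<open>k + 1\<close> bits of its quota together with the two flags \<open>quota > 0\<close> and
  \<open>quota > 2 ^ k\<close>; these bits determine the flags of the children, and receiver \<open>i\<close> outputs
  the flag \<open>quota > 0\<close> of its leaf. A block at height \<open>k\<close> needs \<open>O(k)\<close> gates, so the size is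
  \<open>O(\<Sum>k. 2 ^ (L - k) * k) = O(2 ^ L) = O(n)\<close>, and all carry and borrow chains have length
  \<open>O(L)\<close>, so the depth is \<open>O(log n)\<close>.\<close>

section \<open>Circuits given by a graph of nodes\<close>

definition eval_gates :: "(nat list \<times> 'g \<Rightarrow> 'a list \<Rightarrow> 'a) \<Rightarrow> 'a list \<Rightarrow> (nat list \<times> 'g) list \<Rightarrow> 'a list" where
  "eval_gates F base gs = foldl (\<lambda>vs gt. vs @ [F gt (map (\<lambda>p. vs ! p) (fst gt))]) base gs"

lemma eval_gates_snoc:
  "eval_gates F base (gs @ [gt]) = eval_gates F base gs @ [F gt (map (\<lambda>p. eval_gates F base gs ! p) (fst gt))]"
  by (simp add: eval_gates_def)

lemma length_eval_gates: "length (eval_gates F base gs) = length base + length gs"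
  by (induction gs rule: rev_induct) (simp_all add: eval_gates_snoc, simp add: eval_gates_def)

lemma nth_eval_gates_base: "i < length base \<Longrightarrow> eval_gates F base gs ! i = base ! i"
  by (induction gs rule: rev_induct) (simp_all add: eval_gates_snoc nth_append length_eval_gates,
      simp add: eval_gates_def)

lemma nth_eval_gates:
  assumes "\<forall>g<length gs. \<forall>p\<in>set (fst (gs ! g)). p < length base + g" and "g < length gs"
  shows "eval_gates F base gs ! (length base + g) =
    F (gs ! g) (map (\<lambda>p. eval_gates F base gs ! p) (fst (gs ! g)))"
  using assms
proof (induction gs arbitrary: g rule: rev_induct)
  case (snoc gt gs)
  define R where "R = eval_gates F base gs"
  define v where "v = F gt (map (\<lambda>p. R ! p) (fst gt))"
  have eval: "eval_gates F base (gs @ [gt]) = R @ [v]" by (simp add: eval_gates_snoc R_def v_def)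
  have length_R: "length R = length base + length gs" by (simp add: R_def length_eval_gates)
  have args: "map (\<lambda>p. (R @ [v]) ! p) (fst ((gs @ [gt]) ! g)) = map (\<lambda>p. R ! p) (fst ((gs @ [gt]) ! g))"
  proof (rule map_cong[OF refl])
    fix p assume "p \<in> set (fst ((gs @ [gt]) ! g))"
    then have "p < length base + g" using snoc.prems by blast
    then show "(R @ [v]) ! p = R ! p" using snoc.prems(2) length_R by (simp add: nth_append)
  qed
  show ?case
  proof (cases "g < length gs")
    case True
    then have "R ! (length base + g) = F (gs ! g) (map (\<lambda>p. R ! p) (fst (gs ! g)))"
      using snoc.IH snoc.prems(1) unfolding R_def by (simp add: nth_append)
    then show ?thesis unfolding eval args using True length_R by (simp add: nth_append)
  next
    case False
    then have "g = length gs" using snoc.prems(2) by simp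
    then show ?thesis unfolding eval args using length_R by (simp add: v_def nth_append)
  qed
qed simp

definition gate_pos :: "'v list \<Rightarrow> 'v \<Rightarrow> nat" where
  "gate_pos gs v = (THE g. g < length gs \<and> gs ! g = v)"

definition wire_index :: "nat \<Rightarrow> (nat \<Rightarrow> 'v) \<Rightarrow> 'v list \<Rightarrow> 'v \<Rightarrow> nat" where
  "wire_index m inp gs v = (if v \<in> set gs then m + gate_pos gs v else the_inv inp v)"

definition compile_circuit :: "nat \<Rightarrow> (nat \<Rightarrow> 'v) \<Rightarrow> 'v list \<Rightarrow> ('v \<Rightarrow> 'v list) \<Rightarrow>
    ('v \<Rightarrow> bool list \<Rightarrow> bool) \<Rightarrow> 'v list \<Rightarrow> circuit" where
  "compile_circuit m inp gs args gate outs =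
     Circuit m (map (\<lambda>v. (map (wire_index m inp gs) (args v), gate v)) gs)
       (map (wire_index m inp gs) outs)"

lemma gate_pos_nth: "distinct gs \<Longrightarrow> g < length gs \<Longrightarrow> gate_pos gs (gs ! g) = g"
  unfolding gate_pos_def by (rule the_equality) (auto simp: nth_eq_iff_index_eq)

text \<open>Listing the gates by increasing \<open>level\<close> makes every gate read
  earlier wires only, and the level of a node bounds the depth of its wire.\<close>

locale node_circuit =
  fixes m :: nat and inp :: "nat \<Rightarrow> 'v" and gs :: "'v list" and args :: "'v \<Rightarrow> 'v list"
    and gate :: "'v \<Rightarrow> bool list \<Rightarrow> bool" and level :: "'v \<Rightarrow> nat" and outs :: "'v list"
  assumes inj_inp: "inj inp"
    and distinct_gates: "distinct gs"
    and input_not_gate: "inp i \<notin> set gs"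
    and sorted_levels: "sorted (map level gs)"
    and args_below: "\<And>v u. v \<in> set gs \<Longrightarrow> u \<in> set (args v) \<Longrightarrow>
      level u < level v \<and> u \<in> set gs \<union> inp ` {..<m}"
    and level_pos: "\<And>v. v \<in> set gs \<Longrightarrow> 1 \<le> level v"
    and outs_nodes: "set outs \<subseteq> set gs \<union> inp ` {..<m}"
begin

abbreviation "nodes \<equiv> set gs \<union> inp ` {..<m}"
abbreviation "idx \<equiv> wire_index m inp gs"
abbreviation "circ \<equiv> compile_circuit m inp gs args gate outs"

lemma wire_index_gate: "g < length gs \<Longrightarrow> idx (gs ! g) = m + g"
  unfolding wire_index_def using gate_pos_nth[OF distinct_gates] by simp

lemma wire_index_input: "idx (inp i) = i"
  unfolding wire_index_def using input_not_gate the_inv_f_f[OF inj_inp] by simp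

lemma wire_index_inj: "u \<in> nodes \<Longrightarrow> v \<in> nodes \<Longrightarrow> idx u = idx v \<Longrightarrow> u = v"
  by (auto simp: in_set_conv_nth wire_index_gate wire_index_input)

lemma wire_index_surj: "w < m + length gs \<Longrightarrow> \<exists>u\<in>nodes. w = idx u"
proof (cases "w < m")
  case True
  then show ?thesis by (intro bexI[of _ "inp w"]) (simp_all add: wire_index_input)
next
  case False
  assume "w < m + length gs"
  then have "w - m < length gs" using False by simp
  then show ?thesis using wire_index_gate[of "w - m"] False nth_mem by force
qed

lemma wire_index_bound: "u \<in> nodes \<Longrightarrow> idx u < m + length gs"
  by (auto simp: in_set_conv_nth wire_index_gate wire_index_input)

lemma wire_index_arg: "g < length gs \<Longrightarrow> u \<in> set (args (gs ! g)) \<Longrightarrow> idx u < m + g"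
proof -
  assume g: "g < length gs" and u: "u \<in> set (args (gs ! g))"
  from args_below[OF nth_mem[OF g] u]
  have lt: "level u < level (gs ! g)" and "u \<in> nodes" by auto
  then consider g' where "g' < length gs" "u = gs ! g'" | i where "i < m" "u = inp i"
    by (auto simp: in_set_conv_nth)
  then show ?thesis
  proof cases
    case 1
    have "g' < g"
      using sorted_nth_mono[OF sorted_levels, of g g'] lt 1 g by (cases "g \<le> g'") auto
    then show ?thesis using 1 wire_index_gate by simp
  next
    case 2
    then show ?thesis by (simp add: wire_index_input)
  qed
qed

lemma circ_wf: "wf_circuit circ"
  using wire_index_arg outs_nodes wire_index_bound
  unfolding wf_circuit_def compile_circuit_def by auto

lemma circ_size: "size_c circ = length gs"
  by (simp add: size_c_def compile_circuit_def)

lemma circ_max_fanin: "(\<And>v. v \<in> set gs \<Longrightarrow> length (args v) \<le> K) \<Longrightarrow> max_fanin circ K"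
  unfolding max_fanin_def compile_circuit_def by auto

lemma gate_args_bound:
  "length base = m \<Longrightarrow> \<forall>g<length (c_gates circ). \<forall>p\<in>set (fst (c_gates circ ! g)). p < length base + g"
  using wire_index_arg by (auto simp: compile_circuit_def)

lemma wire_vals_node:
  assumes len: "length inps = m"
    and val_input: "\<And>i. i < m \<Longrightarrow> val (inp i) = inps ! i"
    and val_gate: "\<And>v. v \<in> set gs \<Longrightarrow> val v = gate v (map val (args v))"
  shows "u \<in> nodes \<Longrightarrow> wire_vals circ inps ! idx u = val u"
proof (induction "level u" arbitrary: u rule: less_induct)
  case less
  define W where "W = wire_vals circ inps"
  have W_eval: "W = eval_gates (\<lambda>gt. snd gt) inps (c_gates circ)"
    unfolding W_def wire_vals_def eval_gates_def ..
  have W_input: "W ! i = inps ! i" if "i < m" for i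
    using nth_eval_gates_base[of i inps] len that unfolding W_eval by simp
  have W_gate: "W ! (m + g) = gate (gs ! g) (map (\<lambda>p. W ! p) (map idx (args (gs ! g))))"
    if "g < length gs" for g
    using nth_eval_gates[where F = "\<lambda>gt. snd gt", OF gate_args_bound[OF len]] len that unfolding W_eval
    by (simp add: compile_circuit_def)
  from less.prems consider g where "g < length gs" "u = gs ! g" | i where "i < m" "u = inp i"
    by (auto simp: in_set_conv_nth)
  then show ?case
  proof cases
    case 1
    then have "u \<in> set gs" by simp
    have "W ! idx u = gate u (map (\<lambda>p. W ! p) (map idx (args u)))"
      using W_gate 1 wire_index_gate by simp
    also have "map (\<lambda>p. W ! p) (map idx (args u)) = map val (args u)"
      using less args_below[OF \<open>u \<in> set gs\<close>] unfolding W_def by auto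
    finally show ?thesis using val_gate[OF \<open>u \<in> set gs\<close>] unfolding W_def by simp
  next
    case 2
    then show ?thesis using W_input val_input wire_index_input unfolding W_def by auto
  qed
qed

lemma wire_depths_node: "u \<in> nodes \<Longrightarrow> wire_depths circ ! idx u \<le> level u"
proof (induction "level u" arbitrary: u rule: less_induct)
  case less
  define W where "W = wire_depths circ"
  have W_eval: "W = eval_gates (\<lambda>gt ds. Suc (Max (insert 0 (set ds)))) (replicate m 0) (c_gates circ)"
    unfolding W_def wire_depths_def eval_gates_def compile_circuit_def by simp
  have W_input: "W ! i = 0" if "i < m" for i
    using nth_eval_gates_base[of i "replicate m 0"] that unfolding W_eval by simp
  have W_gate: "W ! (m + g) = Suc (Max (insert 0 (set (map (\<lambda>p. W ! p) (map idx (args (gs ! g)))))))"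
    if "g < length gs" for g
    using nth_eval_gates[where F = "\<lambda>gt ds. Suc (Max (insert 0 (set ds)))",
        OF gate_args_bound[of "replicate m 0"]] that unfolding W_eval
    by (simp add: compile_circuit_def)
  from less.prems consider g where "g < length gs" "u = gs ! g" | i where "i < m" "u = inp i"
    by (auto simp: in_set_conv_nth)
  then show ?case
  proof cases
    case 1
    then have "u \<in> set gs" by simp
    have "\<forall>d \<in> set (map (\<lambda>p. W ! p) (map idx (args u))). d < level u"
      using less args_below[OF \<open>u \<in> set gs\<close>] unfolding W_def by fastforce
    then have "Max (insert 0 (set (map (\<lambda>p. W ! p) (map idx (args u))))) < level u"
      using level_pos[OF \<open>u \<in> set gs\<close>] by (subst Max_less_iff) auto
    then show ?thesis using W_gate 1 wire_index_gate unfolding W_def by (simp add: Suc_le_eq)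
  next
    case 2
    then show ?thesis using W_input wire_index_input unfolding W_def by simp
  qed
qed

lemma circ_eval:
  assumes "length inps = m"
    and "\<And>i. i < m \<Longrightarrow> val (inp i) = inps ! i"
    and "\<And>v. v \<in> set gs \<Longrightarrow> val v = gate v (map val (args v))"
  shows "eval_circuit circ inps = map val outs"
  using wire_vals_node[OF assms] outs_nodes
  by (auto simp: eval_circuit_def compile_circuit_def)

lemma circ_depth_le: "(\<And>u. u \<in> set outs \<Longrightarrow> level u \<le> B) \<Longrightarrow> depth_c circ \<le> B"
  using wire_depths_node outs_nodes
  unfolding depth_c_def compile_circuit_def by (fastforce intro!: Max.boundedI)

lemma fanout_wire_index:
  assumes "u \<in> nodes"
  shows "fanout circ (idx u) = sum_list (map (\<lambda>v. count_list (args v) u) gs) + count_list outs u"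
proof -
  have count: "count_list (map idx xs) (idx u) = count_list xs u" if "set xs \<subseteq> nodes" for xs
    using that
  proof (induction xs)
    case (Cons a xs)
    then have "a \<in> nodes" by simp
    then show ?case using Cons wire_index_inj[OF _ assms] by auto
  qed simp
  have "\<forall>v\<in>set gs. count_list (map idx (args v)) (idx u) = count_list (args v) u"
    using args_below count by blast
  then show ?thesis
    using count[OF outs_nodes] unfolding fanout_def compile_circuit_def
    by (simp add: comp_def) (metis (no_types, lifting) map_cong)
qed

text \<open>A node is read at most K times by each of the at most K gates that can read it.\<close>

lemma circ_max_fanout:
  assumes readers: "\<And>u v. v \<in> set gs \<Longrightarrow> u \<in> set (args v) \<Longrightarrow> v \<in> set (readers u)"
    and readers_len: "\<And>u. length (readers u) \<le> K"
    and args_len: "\<And>v. v \<in> set gs \<Longrightarrow> length (args v) \<le> K"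
    and "distinct outs"
  shows "max_fanout circ (K * K + 1)"
  unfolding max_fanout_def
proof (intro allI impI)
  fix w assume "w < c_inputs circ + length (c_gates circ)"
  then have "w < m + length gs" by (simp add: compile_circuit_def)
  then obtain u where u: "u \<in> nodes" "w = idx u" using wire_index_surj by blast
  have "sum_list (map (\<lambda>v. count_list (args v) u) gs) = (\<Sum>v\<in>set gs. count_list (args v) u)"
    using distinct_gates by (simp add: sum_list_distinct_conv_sum_set)
  also have "\<dots> = (\<Sum>v\<in>set gs \<inter> set (readers u). count_list (args v) u)"
    by (rule sum.mono_neutral_right) (auto dest: readers simp: count_list_0_iff)
  also have "\<dots> \<le> (\<Sum>v\<in>set gs \<inter> set (readers u). K)"
  proof (rule sum_mono)
    fix v assume "v \<in> set gs \<inter> set (readers u)"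
    then show "count_list (args v) u \<le> K"
      using args_len count_le_length[of "args v" u] by fastforce
  qed
  also have "\<dots> = card (set gs \<inter> set (readers u)) * K" by simp
  also have "\<dots> \<le> K * K"
  proof -
    have "card (set gs \<inter> set (readers u)) \<le> card (set (readers u))" by (rule card_mono) auto
    also have "\<dots> \<le> K" using card_length[of "readers u"] readers_len[of u] by linarith
    finally show ?thesis by simp
  qed
  finally have "sum_list (map (\<lambda>v. count_list (args v) u) gs) \<le> K * K" .
  moreover have "count_list outs u \<le> 1"
    using \<open>distinct outs\<close> by (induction outs) (auto simp: count_list_0_iff)
  ultimately show "fanout circ w \<le> K * K + 1" using fanout_wire_index u by simp
qed

end

section \<open>Binary addition and subtraction\<close>

definition carry :: "int \<Rightarrow> int \<Rightarrow> nat \<Rightarrow> bool" where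
  "carry a b j \<longleftrightarrow> 2 ^ j \<le> a mod 2 ^ j + b mod 2 ^ j"

definition borrow :: "int \<Rightarrow> int \<Rightarrow> nat \<Rightarrow> bool" where
  "borrow a b j \<longleftrightarrow> a mod 2 ^ j < b mod 2 ^ j"

lemma carry_0 [simp]: "\<not> carry a b 0"
  by (simp add: carry_def)

lemma borrow_0 [simp]: "\<not> borrow a b 0"
  by (simp add: borrow_def)

lemma mod_pow2_Suc: "(a::int) mod 2 ^ Suc j = a mod 2 ^ j + 2 ^ j * of_bool (bit a j)"
proof -
  have "a mod (2 ^ j * 2) = 2 ^ j * (a div 2 ^ j mod 2) + a mod 2 ^ j"
    by (rule zmod_zmult2_eq) simp
  then show ?thesis by (simp add: bit_iff_odd odd_iff_mod_2_eq_one even_iff_mod_2_eq_zero mult.commute)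
qed

lemma bit_add: "bit (a + b :: int) j \<longleftrightarrow> bit a j \<noteq> (bit b j \<noteq> carry a b j)"
proof -
  define A B where "A = a mod 2 ^ j" and "B = b mod 2 ^ j"
  have AB: "0 \<le> A" "A < 2 ^ j" "0 \<le> B" "B < 2 ^ j" by (simp_all add: A_def B_def)
  have "(A + B) div 2 ^ j = of_bool (2 ^ j \<le> A + B)"
  proof (cases "2 ^ j \<le> A + B")
    case True
    have "(A + B - 2 ^ j) div 2 ^ j = 0" using AB True by (intro div_pos_pos_trivial) auto
    moreover have "A + B = (A + B - 2 ^ j) + 2 ^ j" by simp
    ultimately have "(A + B) div 2 ^ j = 1" by (metis div_add_self2 add_0 power_not_zero zero_neq_numeral)
    then show ?thesis using True by simp
  next
    case False
    then show ?thesis using AB by (simp add: div_pos_pos_trivial)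
  qed
  moreover have "(a + b) div 2 ^ j = a div 2 ^ j + b div 2 ^ j + (A + B) div 2 ^ j"
    unfolding A_def B_def by (rule div_add1_eq)
  ultimately show ?thesis by (auto simp: bit_iff_odd carry_def A_def B_def)
qed

lemma mod_pow2_bounds: "0 \<le> (a::int) mod 2 ^ j" "(a::int) mod 2 ^ j < 2 ^ j"
  by simp_all

lemma carry_Suc:
  "carry a b (Suc j) \<longleftrightarrow> bit a j \<and> bit b j \<or> bit a j \<and> carry a b j \<or> bit b j \<and> carry a b j"
  unfolding carry_def mod_pow2_Suc[of a] mod_pow2_Suc[of b]
proof (cases "bit a j"; cases "bit b j")
qed (use mod_pow2_bounds[of a j] mod_pow2_bounds[of b j] in \<open>simp_all del: pos_mod_bound pos_mod_sign\<close>)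

lemma borrow_Suc:
  "borrow a b (Suc j) \<longleftrightarrow> \<not> bit a j \<and> (bit b j \<or> borrow a b j) \<or> bit b j \<and> borrow a b j"
  unfolding borrow_def mod_pow2_Suc[of a] mod_pow2_Suc[of b]
proof (cases "bit a j"; cases "bit b j")
qed (use mod_pow2_bounds[of a j] mod_pow2_bounds[of b j] in \<open>simp_all del: pos_mod_bound pos_mod_sign\<close>)

lemma carry_diff: "carry (a - b) b j \<longleftrightarrow> borrow a b j"
proof -
  define A B P where "A = a mod 2 ^ j" and "B = b mod 2 ^ j" and "P = (2::int) ^ j"
  have AB: "0 \<le> A" "A < P" "0 \<le> B" "B < P" by (simp_all add: A_def B_def P_def)
  have "(a - b) mod P = (A - B) mod P" unfolding A_def B_def P_def by (simp add: mod_diff_eq)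
  also have "\<dots> = A - B + (if A < B then P else 0)"
  proof (cases "A < B")
    case True
    have "(A - B) mod P = (A - B + P) mod P" by simp
    also have "\<dots> = A - B + P" using AB True by (intro mod_pos_pos_trivial) auto
    finally show ?thesis using True by simp
  qed (use AB in \<open>simp add: mod_pos_pos_trivial\<close>)
  finally have "(a - b) mod P = A - B + (if A < B then P else 0)" .
  moreover have "a mod P = A" "b mod P = B" by (simp_all add: A_def B_def P_def)
  ultimately show ?thesis using AB unfolding carry_def borrow_def P_def[symmetric] by auto
qed

lemma bit_diff: "bit (a - b :: int) j \<longleftrightarrow> bit a j \<noteq> (bit b j \<noteq> borrow a b j)"
  using bit_add[of "a - b" b j] by (auto simp: carry_diff)

lemma mod_pow2_Suc_eq_0: "(a::int) mod 2 ^ Suc j \<noteq> 0 \<longleftrightarrow> a mod 2 ^ j \<noteq> 0 \<or> bit a j"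
    unfolding mod_pow2_Suc[of a]
proof (cases "bit a j")
qed (use mod_pow2_bounds[of a j] in \<open>simp_all del: pos_mod_bound pos_mod_sign\<close>)

lemma eq_mod_pow2_plus_bit:
  assumes "0 \<le> d" "d < 2 ^ Suc k"
  shows "(d::int) = d mod 2 ^ k + 2 ^ k * of_bool (bit d k)"
  using mod_pow2_Suc[of d k] assms by simp

lemma pos_iff_bits:
  assumes "0 \<le> d" "d \<le> 2 ^ k"
  shows "0 < (d::int) \<longleftrightarrow> bit d k \<or> d mod 2 ^ k \<noteq> 0"
proof -
  define r P b where "r = d mod 2 ^ k" and "P = (2::int) ^ k" and "b = bit d k"
  have r: "0 \<le> r" "r < P" by (simp_all add: r_def P_def)
  have "d < 2 ^ Suc k" using assms by (simp add: order_le_less_trans)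
  then have "d = r + P * of_bool b"
    using assms eq_mod_pow2_plus_bit unfolding r_def P_def b_def by blast
  then show ?thesis unfolding r_def[symmetric] b_def[symmetric] using r by (cases b) auto
qed

lemma gt_pow2_iff_bits:
  assumes "0 \<le> d" "d \<le> 2 ^ Suc k"
  shows "2 ^ k < (d::int) \<longleftrightarrow> bit d (Suc k) \<or> bit d k \<and> d mod 2 ^ k \<noteq> 0"
proof -
  define r P b0 b1 where "r = d mod 2 ^ k" and "P = (2::int) ^ k"
    and "b0 = bit d k" and "b1 = bit d (Suc k)"
  have r: "0 \<le> r" "r < P" by (simp_all add: r_def P_def)
  have "d < 2 ^ Suc (Suc k)" using assms by (simp add: order_le_less_trans)
  then have "d = d mod 2 ^ Suc k + 2 ^ Suc k * of_bool b1"
    using assms(1) eq_mod_pow2_plus_bit unfolding b1_def by blast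
  also have "d mod 2 ^ Suc k = r + P * of_bool b0"
    unfolding r_def P_def b0_def by (rule mod_pow2_Suc)
  finally have "d = r + P * of_bool b0 + 2 * P * of_bool b1" by (simp add: P_def)
  moreover have "d \<le> 2 * P" using assms(2) by (simp add: P_def)
  ultimately show ?thesis
    unfolding r_def[symmetric] P_def[symmetric] b0_def[symmetric] b1_def[symmetric]
    using r by (cases b0; cases b1) auto
qed

lemma borrow_iff_less:
  assumes "0 \<le> t" "t \<le> 2 ^ Suc k" "0 \<le> c" "c \<le> 2 ^ k"
  shows "borrow t c (k + 2) \<longleftrightarrow> t < (c::int)"
proof -
  have "(2::int) ^ k < 2 ^ (k + 2)" "(2::int) ^ Suc k < 2 ^ (k + 2)" by simp_all
  then have "t < 2 ^ (k + 2)" "c < 2 ^ (k + 2)" using assms by linarith+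
  then have "t mod 2 ^ (k + 2) = t" "c mod 2 ^ (k + 2) = c"
    using assms by (simp_all only: mod_pos_pos_trivial)
  then show ?thesis by (simp add: borrow_def)
qed

text \<open>An integer \<open>0 \<le> t \<le> 2 ^ Suc k\<close> is determined by its low bits; otherwise only the
  flags \<open>0 < t\<close> and \<open>2 ^ Suc k < t\<close> are known. From these data the next three lemmas compute
  the flags \<open>0 < _\<close> and \<open>2 ^ k < _\<close> of \<open>t\<close> and of \<open>t - c\<close>, i.e. of the quotas of the two
  children of a block with quota \<open>t\<close>.\<close>

lemma diff_pos_iff_flags:
  assumes "0 \<le> c" "c \<le> 2 ^ k"
  shows "0 < t - c \<longleftrightarrow> 2 ^ Suc k < t \<or>
    0 < t \<and> \<not> borrow t c (k + 2) \<and> (bit (t - c) (Suc k) \<or> (t - c) mod 2 ^ Suc k \<noteq> 0)"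
proof -
  have pow: "(2::int) ^ k < 2 ^ Suc k" by simp
  consider "t \<le> 0" | "2 ^ Suc k < t" | "0 < t" "t \<le> 2 ^ Suc k"
    by linarith
  then show ?thesis
  proof cases
    case 1
    then have "\<not> 0 < t - c" "\<not> 2 ^ Suc k < t" using assms pow by linarith+
    then show ?thesis using 1 by simp
  next
    case 2
    then have "0 < t - c" using assms pow by linarith
    then show ?thesis using 2 by simp
  next
    case 3
    then have borrow: "borrow t c (k + 2) \<longleftrightarrow> t < c" and "\<not> 2 ^ Suc k < t"
      using assms borrow_iff_less[of t k c] by simp_all
    show ?thesis
    proof (cases "t < c")
      case True
      then show ?thesis using borrow \<open>\<not> 2 ^ Suc k < t\<close> by simp
    next
      case False
      then have "0 < t - c \<longleftrightarrow> bit (t - c) (Suc k) \<or> (t - c) mod 2 ^ Suc k \<noteq> 0"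
        using 3 assms by (intro pos_iff_bits) linarith+
      then show ?thesis using False borrow 3 \<open>\<not> 2 ^ Suc k < t\<close> by simp
    qed
  qed
qed

lemma gt_pow2_iff_flags:
  "2 ^ k < (t::int) \<longleftrightarrow> 2 ^ Suc k < t \<or> 0 < t \<and> (bit t (Suc k) \<or> bit t k \<and> t mod 2 ^ k \<noteq> 0)"
proof -
  have pow: "(0::int) < 2 ^ k" "(2::int) ^ k < 2 ^ Suc k" by simp_all
  consider "t \<le> 0" | "2 ^ Suc k < t" | "0 < t" "t \<le> 2 ^ Suc k"
    by linarith
  then show ?thesis
  proof cases
    case 1
    then have "\<not> 2 ^ k < t" "\<not> 2 ^ Suc k < t" using pow by linarith+
    then show ?thesis using 1 by simp
  next
    case 2
    then have "2 ^ k < t" using pow by linarith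
    then show ?thesis using 2 by simp
  next
    case 3
    then show ?thesis using gt_pow2_iff_bits[of t k] by auto
  qed
qed

lemma diff_gt_pow2_iff_flags:
  assumes "0 \<le> c" "c \<le> 2 ^ k"
  shows "2 ^ k < t - c \<longleftrightarrow> 2 ^ Suc k < t \<or>
    0 < t \<and> \<not> borrow t c (k + 2) \<and> (bit (t - c) (Suc k) \<or> bit (t - c) k \<and> (t - c) mod 2 ^ k \<noteq> 0)"
proof -
  have pow: "(0::int) < 2 ^ k" "(2::int) ^ Suc k = 2 * 2 ^ k" by simp_all
  consider "t \<le> 0" | "2 ^ Suc k < t" | "0 < t" "t \<le> 2 ^ Suc k"
    by linarith
  then show ?thesis
  proof cases
    case 1
    then have "\<not> 2 ^ k < t - c" "\<not> 2 ^ Suc k < t" using assms pow by linarith+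
    then show ?thesis using 1 by simp
  next
    case 2
    then have "2 ^ k < t - c" using assms pow by linarith
    then show ?thesis using 2 by simp
  next
    case 3
    then have borrow: "borrow t c (k + 2) \<longleftrightarrow> t < c" and "\<not> 2 ^ Suc k < t"
      using assms borrow_iff_less[of t k c] by simp_all
    show ?thesis
    proof (cases "t < c")
      case True
      then have "\<not> 2 ^ k < t - c" using pow by linarith
      then show ?thesis using True borrow \<open>\<not> 2 ^ Suc k < t\<close> by simp
    next
      case False
      then have "2 ^ k < t - c \<longleftrightarrow> bit (t - c) (Suc k) \<or> bit (t - c) k \<and> (t - c) mod 2 ^ k \<noteq> 0"
        using 3 assms by (intro gt_pow2_iff_bits) linarith+
      then show ?thesis using False borrow 3 \<open>\<not> 2 ^ Suc k < t\<close> by simp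
    qed
  qed
qed

section \<open>The construction\<close>

lemma nbits_bounds: "n < 2 ^ nbits n" "1 \<le> n \<Longrightarrow> 1 \<le> nbits n \<and> 2 ^ (nbits n - 1) \<le> n"
proof -
  show lt: "n < 2 ^ nbits n"
    unfolding nbits_def by (rule LeastI[of _ n]) simp
  assume "1 \<le> n"
  then have "nbits n \<noteq> 0" using lt by (cases "nbits n") auto
  moreover have "\<not> n < 2 ^ (nbits n - 1)"
  proof
    assume "n < 2 ^ (nbits n - 1)"
    then have "nbits n \<le> nbits n - 1" unfolding nbits_def by (rule Least_le)
    then show False using \<open>nbits n \<noteq> 0\<close> by simp
  qed
  ultimately show "1 \<le> nbits n \<and> 2 ^ (nbits n - 1) \<le> n" by simp
qed

datatype node =
    Input nat
  | CntBit nat nat nat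
  | CntCarry nat nat nat
  | QuotaBit nat nat nat
  | QuotaBorrow nat nat nat
  | RightTop nat nat
  | QuotaNZ nat nat nat
  | QuotaPos nat nat
  | QuotaBig nat nat

text \<open>The node with indices \<open>k p\<close> belongs to the \<open>p\<close>-th block of \<open>2 ^ k\<close> consecutive
  receivers (\<open>node_val\<close> below gives the precise meaning): \<open>CntBit\<close> and \<open>CntCarry\<close> are the bits
  and carries of its count of marked receivers, \<open>QuotaBit\<close> the bits of its quota,
  \<open>QuotaBorrow\<close> and \<open>RightTop\<close> the borrows and the top bit of the quota of its right child,
  \<open>QuotaNZ k p j\<close> tells whether the quota is nonzero modulo \<open>2 ^ j\<close>, and \<open>QuotaPos\<close> and
  \<open>QuotaBig\<close> are the two flags.\<close>

fun is_node :: "nat \<Rightarrow> node \<Rightarrow> bool" where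
  "is_node L (Input i) = False"
| "is_node L (CntBit k p j) = (k \<le> L \<and> p < 2 ^ (L - k) \<and> j \<le> k)"
| "is_node L (CntCarry k p j) = (1 \<le> k \<and> k \<le> L \<and> p < 2 ^ (L - k) \<and> j < k)"
| "is_node L (QuotaBit k p j) = (k \<le> L \<and> p < 2 ^ (L - k) \<and> j \<le> k)"
| "is_node L (QuotaBorrow k p j) = (1 \<le> k \<and> k \<le> L \<and> p < 2 ^ (L - k) \<and> j \<le> k + 1)"
| "is_node L (RightTop k p) = (1 \<le> k \<and> k \<le> L \<and> p < 2 ^ (L - k))"
| "is_node L (QuotaNZ k p j) = (k \<le> L \<and> p < 2 ^ (L - k) \<and> j \<le> k + 1)"
| "is_node L (QuotaPos k p) = (k \<le> L \<and> p < 2 ^ (L - k))"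
| "is_node L (QuotaBig k p) = (k \<le> L \<and> p < 2 ^ (L - k))"

text \<open>The circuit inputs are \<open>Input i\<close> for the marks \<open>i < n\<close> and \<open>Input (n + j)\<close> for bit
  \<open>j\<close> of \<open>l\<close>.\<close>

fun node_args :: "nat \<Rightarrow> nat \<Rightarrow> node \<Rightarrow> node list" where
  "node_args L n (Input i) = []"
| "node_args L n (CntBit k p j) =
    (if k = 0 then (if p < n then [Input p] else [])
     else if j < k then [CntBit (k - 1) (2 * p) j, CntBit (k - 1) (2 * p + 1) j, CntCarry k p j]
     else [CntBit (k - 1) (2 * p) (k - 1), CntBit (k - 1) (2 * p + 1) (k - 1), CntCarry k p (k - 1)])"
| "node_args L n (CntCarry k p j) =
    (if j = 0 then []
     else [CntBit (k - 1) (2 * p) (j - 1), CntBit (k - 1) (2 * p + 1) (j - 1), CntCarry k p (j - 1)])"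
| "node_args L n (QuotaBit k p j) =
    (if k = L then (if j < L then [Input (n + j)] else [])
     else if even p then [QuotaBit (k + 1) (p div 2) j]
     else [QuotaBit (k + 1) (p div 2) j, CntBit k (p - 1) j, QuotaBorrow (k + 1) (p div 2) j])"
| "node_args L n (QuotaBorrow k p j) =
    (if j = 0 then []
     else if j \<le> k then [QuotaBit k p (j - 1), CntBit (k - 1) (2 * p) (j - 1), QuotaBorrow k p (j - 1)]
     else [QuotaBit k p k, QuotaBorrow k p k])"
| "node_args L n (RightTop k p) = [QuotaBit k p k, QuotaBorrow k p k]"
| "node_args L n (QuotaNZ k p j) = (if j = 0 then [] else [QuotaNZ k p (j - 1), QuotaBit k p (j - 1)])"
| "node_args L n (QuotaPos k p) =
    (if k = L then [QuotaNZ k p (k + 1)]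
     else if even p then [QuotaPos (k + 1) (p div 2)]
     else [QuotaBig (k + 1) (p div 2), QuotaPos (k + 1) (p div 2), QuotaBorrow (k + 1) (p div 2) (k + 2),
           RightTop (k + 1) (p div 2), QuotaNZ k p (k + 1)])"
| "node_args L n (QuotaBig k p) =
    (if k = L then []
     else if even p then
       [QuotaBig (k + 1) (p div 2), QuotaPos (k + 1) (p div 2), QuotaBit (k + 1) (p div 2) (k + 1),
        QuotaBit (k + 1) (p div 2) k, QuotaNZ (k + 1) (p div 2) k]
     else [QuotaBig (k + 1) (p div 2), QuotaPos (k + 1) (p div 2), QuotaBorrow (k + 1) (p div 2) (k + 2),
           RightTop (k + 1) (p div 2), QuotaBit k p k, QuotaNZ k p k])"

text \<open>Nodes without arguments (carries and borrows into bit 0, missing inputs) are constantly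
  \<open>False\<close>.\<close>

definition copy_gate :: "bool list \<Rightarrow> bool" where
  "copy_gate bs = (case bs of [] \<Rightarrow> False | b # _ \<Rightarrow> b)"

fun node_gate :: "nat \<Rightarrow> node \<Rightarrow> bool list \<Rightarrow> bool" where
  "node_gate L (Input i) = copy_gate"
| "node_gate L (CntBit k p j) =
    (if k = 0 then copy_gate
     else if j < k then (\<lambda>b. b ! 0 \<noteq> (b ! 1 \<noteq> b ! 2))
     else (\<lambda>b. b ! 0 \<and> b ! 1 \<or> b ! 0 \<and> b ! 2 \<or> b ! 1 \<and> b ! 2))"
| "node_gate L (CntCarry k p j) =
    (if j = 0 then copy_gate else (\<lambda>b. b ! 0 \<and> b ! 1 \<or> b ! 0 \<and> b ! 2 \<or> b ! 1 \<and> b ! 2))"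
| "node_gate L (QuotaBit k p j) =
    (if k = L \<or> even p then copy_gate else (\<lambda>b. b ! 0 \<noteq> (b ! 1 \<noteq> b ! 2)))"
| "node_gate L (QuotaBorrow k p j) =
    (if j = 0 then copy_gate
     else if j \<le> k then (\<lambda>b. \<not> b ! 0 \<and> (b ! 1 \<or> b ! 2) \<or> b ! 1 \<and> b ! 2)
     else (\<lambda>b. \<not> b ! 0 \<and> b ! 1))"
| "node_gate L (RightTop k p) = (\<lambda>b. b ! 0 \<noteq> b ! 1)"
| "node_gate L (QuotaNZ k p j) = (if j = 0 then copy_gate else (\<lambda>b. b ! 0 \<or> b ! 1))"
| "node_gate L (QuotaPos k p) =
    (if k = L \<or> even p then copy_gate else (\<lambda>b. b ! 0 \<or> b ! 1 \<and> \<not> b ! 2 \<and> (b ! 3 \<or> b ! 4)))"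
| "node_gate L (QuotaBig k p) =
    (if k = L then copy_gate
     else if even p then (\<lambda>b. b ! 0 \<or> b ! 1 \<and> (b ! 2 \<or> b ! 3 \<and> b ! 4))
     else (\<lambda>b. b ! 0 \<or> b ! 1 \<and> \<not> b ! 2 \<and> (b ! 3 \<or> b ! 4 \<and> b ! 5)))"

fun node_level :: "nat \<Rightarrow> node \<Rightarrow> nat" where
  "node_level L (Input i) = 0"
| "node_level L (CntBit k p j) = 2 * (k + j) + 1"
| "node_level L (CntCarry k p j) = 2 * (k + j)"
| "node_level L (QuotaBit k p j) = 4 * L + 2 + 4 * (L - k) + 2 * j"
| "node_level L (QuotaBorrow k p j) = 4 * L + 3 + 4 * (L - k) + 2 * j"
| "node_level L (RightTop k p) = 4 * L + 4 + 4 * (L - k) + 2 * k"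
| "node_level L (QuotaNZ k p j) = 4 * L + 3 + 4 * (L - k) + 2 * j"
| "node_level L (QuotaPos k p) = 4 * L + 6 + 4 * (L - k) + 2 * k"
| "node_level L (QuotaBig k p) = 4 * L + 6 + 4 * (L - k) + 2 * k"

fun node_readers :: "nat \<Rightarrow> nat \<Rightarrow> node \<Rightarrow> node list" where
  "node_readers L n (Input i) = [CntBit 0 i 0, QuotaBit L 0 (i - n)]"
| "node_readers L n (CntBit k p j) =
    [CntBit (k + 1) (p div 2) j, CntBit (k + 1) (p div 2) (k + 1), CntCarry (k + 1) (p div 2) (j + 1),
     QuotaBorrow (k + 1) (p div 2) (j + 1), QuotaBit k (p + 1) j]"
| "node_readers L n (CntCarry k p j) = [CntBit k p j, CntCarry k p (j + 1), CntBit k p (j + 1)]"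
| "node_readers L n (QuotaBit k p j) =
    [QuotaBit (k - 1) (2 * p) j, QuotaBit (k - 1) (2 * p + 1) j, QuotaBorrow k p (j + 1), RightTop k p,
     QuotaNZ k p (j + 1), QuotaBig (k - 1) (2 * p), QuotaBig k p]"
| "node_readers L n (QuotaBorrow k p j) =
    [QuotaBorrow k p (j + 1), QuotaBit (k - 1) (2 * p + 1) j, RightTop k p, QuotaPos (k - 1) (2 * p + 1),
     QuotaBig (k - 1) (2 * p + 1)]"
| "node_readers L n (RightTop k p) = [QuotaPos (k - 1) (2 * p + 1), QuotaBig (k - 1) (2 * p + 1)]"
| "node_readers L n (QuotaNZ k p j) =
    [QuotaNZ k p (j + 1), QuotaPos k p, QuotaBig k p, QuotaBig (k - 1) (2 * p)]"
| "node_readers L n (QuotaPos k p) =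
    [QuotaPos (k - 1) (2 * p), QuotaBig (k - 1) (2 * p), QuotaPos (k - 1) (2 * p + 1),
     QuotaBig (k - 1) (2 * p + 1)]"
| "node_readers L n (QuotaBig k p) =
    [QuotaPos (k - 1) (2 * p), QuotaBig (k - 1) (2 * p), QuotaPos (k - 1) (2 * p + 1),
     QuotaBig (k - 1) (2 * p + 1)]"

lemma length_node_readers: "length (node_readers L n u) \<le> 7"
  by (cases u) auto

lemma length_node_args: "length (node_args L n v) \<le> 7"
  by (cases v) auto

lemma child_block_bound: "1 \<le> k \<Longrightarrow> k \<le> L \<Longrightarrow> (p::nat) < 2 ^ (L - k) \<Longrightarrow> 2 * p + 1 < 2 ^ (L - (k - 1))"
proof -
  assume "1 \<le> k" "k \<le> L" "p < 2 ^ (L - k)"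
  moreover have "L - (k - 1) = Suc (L - k)" using \<open>1 \<le> k\<close> \<open>k \<le> L\<close> by simp
  ultimately show ?thesis by simp
qed

lemma parent_block_bound: "k < L \<Longrightarrow> (p::nat) < 2 ^ (L - k) \<Longrightarrow> p div 2 < 2 ^ (L - (k + 1))"
proof -
  assume "k < L" "p < 2 ^ (L - k)"
  moreover have "L - k = Suc (L - (k + 1))" using \<open>k < L\<close> by simp
  ultimately show ?thesis by simp
qed

lemma node_args_below:
  "is_node L v \<Longrightarrow> u \<in> set (node_args L n v) \<Longrightarrow>
    node_level L u < node_level L v \<and> (is_node L u \<or> (\<exists>i<n + L. u = Input i))"
proof (cases v)
  case (CntBit k p j)
  assume "is_node L v" "u \<in> set (node_args L n v)"
  then show ?thesis using CntBit child_block_bound[of k L p] by (auto split: if_splits)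
next
  case (CntCarry k p j)
  assume "is_node L v" "u \<in> set (node_args L n v)"
  then show ?thesis using CntCarry child_block_bound[of k L p] by (auto split: if_splits)
next
  case (QuotaBit k p j)
  assume "is_node L v" "u \<in> set (node_args L n v)"
  then show ?thesis using QuotaBit parent_block_bound[of k L p] by (auto split: if_splits)
next
  case (QuotaBorrow k p j)
  assume "is_node L v" "u \<in> set (node_args L n v)"
  then show ?thesis using QuotaBorrow child_block_bound[of k L p] by (auto split: if_splits)
next
  case (QuotaPos k p)
  assume "is_node L v" "u \<in> set (node_args L n v)"
  then show ?thesis using QuotaPos parent_block_bound[of k L p] by (auto split: if_splits)
next
  case (QuotaBig k p)
  assume "is_node L v" "u \<in> set (node_args L n v)"
  then show ?thesis using QuotaBig parent_block_bound[of k L p] by (auto split: if_splits)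
qed (auto split: if_splits)

lemma node_level_pos: "is_node L v \<Longrightarrow> 1 \<le> node_level L v"
  by (cases v) auto

lemma node_readers_complete: "is_node L v \<Longrightarrow> u \<in> set (node_args L n v) \<Longrightarrow> v \<in> set (node_readers L n u)"
  by (cases v) (auto split: if_splits simp: even_two_times_div_two)

section \<open>Correctness\<close>

text \<open>The tree has \<open>2 ^ L > n\<close> leaves; the receivers beyond \<open>n\<close> count as unmarked.\<close>

definition marked :: "nat \<Rightarrow> bool list \<Rightarrow> nat \<Rightarrow> bool" where
  "marked n x i \<longleftrightarrow> i < n \<and> x ! i"

definition prefix_count :: "nat \<Rightarrow> bool list \<Rightarrow> nat \<Rightarrow> int" where
  "prefix_count n x a = (\<Sum>i<a. of_bool (marked n x i))"

definition block_count :: "nat \<Rightarrow> bool list \<Rightarrow> nat \<Rightarrow> nat \<Rightarrow> int" where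
  "block_count n x k p = (\<Sum>i\<in>{p * 2 ^ k..<(p + 1) * 2 ^ k}. of_bool (marked n x i))"

definition quota :: "nat \<Rightarrow> bool list \<Rightarrow> nat \<Rightarrow> nat \<Rightarrow> nat \<Rightarrow> int" where
  "quota n x l k p = int l - prefix_count n x (p * 2 ^ k)"

fun node_val :: "nat \<Rightarrow> bool list \<Rightarrow> nat \<Rightarrow> node \<Rightarrow> bool" where
  "node_val n x l (Input i) = b2u_input n x l ! i"
| "node_val n x l (CntBit k p j) = bit (block_count n x k p) j"
| "node_val n x l (CntCarry k p j) = carry (block_count n x (k - 1) (2 * p)) (block_count n x (k - 1) (2 * p + 1)) j"
| "node_val n x l (QuotaBit k p j) = bit (quota n x l k p) j"
| "node_val n x l (QuotaBorrow k p j) = borrow (quota n x l k p) (block_count n x (k - 1) (2 * p)) j"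
| "node_val n x l (RightTop k p) = bit (quota n x l k p - block_count n x (k - 1) (2 * p)) k"
| "node_val n x l (QuotaNZ k p j) = (quota n x l k p mod 2 ^ j \<noteq> 0)"
| "node_val n x l (QuotaPos k p) = (0 < quota n x l k p)"
| "node_val n x l (QuotaBig k p) = (2 ^ k < quota n x l k p)"

lemma block_count_Suc: "block_count n x (Suc k) q = block_count n x k (2 * q) + block_count n x k (2 * q + 1)"
proof -
  have "q * 2 ^ Suc k = 2 * q * 2 ^ k" "(q + 1) * 2 ^ Suc k = (2 * q + 1 + 1) * 2 ^ k" by simp_all
  then show ?thesis unfolding block_count_def
    by (simp only:) (rule sum.atLeastLessThan_concat[symmetric]; simp)
qed

lemma block_count_bounds: "0 \<le> block_count n x k p \<and> block_count n x k p \<le> 2 ^ k"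
proof -
  have "block_count n x k p \<le> of_nat (card {p * 2 ^ k..<(p + 1) * 2 ^ k}) * 1"
    unfolding block_count_def by (rule sum_bounded_above) auto
  moreover have "card {p * 2 ^ k..<(p + 1) * 2 ^ k} = 2 ^ k" by (simp add: algebra_simps)
  moreover have "0 \<le> block_count n x k p" unfolding block_count_def by (rule sum_nonneg) auto
  ultimately show ?thesis by simp
qed

lemma not_bit_if_less_pow2: "0 \<le> (a::int) \<Longrightarrow> a < 2 ^ j \<Longrightarrow> \<not> bit a j"
  by (simp add: bit_iff_odd div_pos_pos_trivial)

lemma block_count_top_bit: "\<not> bit (block_count n x k p) (Suc k)"
proof -
  have "(2::int) ^ k < 2 ^ Suc k" by simp
  then have "block_count n x k p < 2 ^ Suc k" using block_count_bounds[of n x k p] by linarith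
  then show ?thesis using block_count_bounds[of n x k p] by (intro not_bit_if_less_pow2) auto
qed

lemma quota_left: "quota n x l k (2 * q) = quota n x l (Suc k) q"
  unfolding quota_def by (simp add: ac_simps)

lemma quota_right: "quota n x l k (2 * q + 1) = quota n x l (Suc k) q - block_count n x k (2 * q)"
proof -
  have "prefix_count n x ((2 * q + 1) * 2 ^ k) = prefix_count n x (2 * q * 2 ^ k) + block_count n x k (2 * q)"
    unfolding prefix_count_def block_count_def lessThan_atLeast0
    by (rule sum.atLeastLessThan_concat[symmetric]) simp_all
  then show ?thesis unfolding quota_def by (simp add: ac_simps)
qed

lemma prefix_count_eq_card: "length x = n \<Longrightarrow> i \<le> n \<Longrightarrow> prefix_count n x i = int (card {j. j < i \<and> x ! j})"
proof -
  assume "length x = n" "i \<le> n"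
  then have "{..<i} \<inter> {j. marked n x j} = {j. j < i \<and> x ! j}" unfolding marked_def by auto
  then show ?thesis unfolding prefix_count_def by (simp add: of_bool_def sum.If_cases)
qed

context
  fixes L n :: nat and x :: "bool list" and l :: nat
  assumes L_eq: "L = nbits n" and length_x: "length x = n" and l_le: "l \<le> n"
begin

lemma quota_root: "quota n x l L 0 = int l"
  unfolding quota_def prefix_count_def by simp

lemma l_less: "int l < 2 ^ L"
  using l_le nbits_bounds(1)[of n] unfolding L_eq
  by (metis le_less_trans of_nat_less_iff of_nat_numeral of_nat_power)

lemma input_mark: "i < n \<Longrightarrow> b2u_input n x l ! i = x ! i"
  unfolding b2u_input_def using length_x by (simp add: nth_append)

lemma input_bit:
  assumes "j < L"
  shows "b2u_input n x l ! (n + j) = bit (int l) j"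
proof -
  have "bit (int l) j \<longleftrightarrow> odd (l div 2 ^ j)" by (metis bit_iff_odd bit_of_nat_iff_bit)
  then show ?thesis unfolding b2u_input_def using assms length_x L_eq by (simp add: nth_append)
qed

lemma node_val_CntBit:
  assumes "is_node L (CntBit k p j)"
  shows "node_val n x l (CntBit k p j) = node_gate L (CntBit k p j) (map (node_val n x l) (node_args L n (CntBit k p j)))"
proof (cases k)
  case 0
  moreover have "j = 0" using assms 0 by simp
  moreover have "block_count n x 0 p = of_bool (marked n x p)" by (simp add: block_count_def)
  ultimately show ?thesis using input_mark by (simp add: copy_gate_def marked_def)
next
  case (Suc k')
  show ?thesis
  proof (cases "j < k")
    case True
    then show ?thesis unfolding Suc by (simp add: block_count_Suc bit_add)
  next
    case False
    then have j: "j = Suc k'" using assms Suc by simp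
    have "bit (block_count n x k' (2 * p) + block_count n x k' (2 * p + 1)) (Suc k') =
      carry (block_count n x k' (2 * p)) (block_count n x k' (2 * p + 1)) (Suc k')"
      using bit_add block_count_top_bit by simp
    then show ?thesis unfolding Suc j by (simp add: block_count_Suc carry_Suc)
  qed
qed

lemma node_val_CntCarry:
  "node_val n x l (CntCarry k p j) =
    node_gate L (CntCarry k p j) (map (node_val n x l) (node_args L n (CntCarry k p j)))"
  by (cases j) (simp_all add: copy_gate_def carry_Suc)

lemma node_val_QuotaBit:
  assumes "is_node L (QuotaBit k p j)"
  shows "node_val n x l (QuotaBit k p j) =
    node_gate L (QuotaBit k p j) (map (node_val n x l) (node_args L n (QuotaBit k p j)))"
proof -
  consider "k = L" | "k \<noteq> L" "even p" | "k \<noteq> L" "odd p" by blast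
  then show ?thesis
  proof cases
    case 1
    then have "p = 0" "j \<le> L" using assms by simp_all
    moreover have "\<not> bit (int l) L" using l_less by (intro not_bit_if_less_pow2) auto
    ultimately show ?thesis using 1 quota_root input_bit
      by (cases "j < L") (auto simp: copy_gate_def)
  next
    case 2
    then obtain q where "p = 2 * q" by blast
    then show ?thesis using 2 by (simp add: copy_gate_def quota_left)
  next
    case 3
    then obtain q where q: "p = 2 * q + 1" using oddE by blast
    then have "quota n x l k p = quota n x l (Suc k) q - block_count n x k (2 * q)"
      "p div 2 = q" "p - 1 = 2 * q" using quota_right by simp_all
    then show ?thesis using 3 by (simp add: bit_diff)
  qed
qed

lemma node_val_QuotaBorrow:
  assumes "is_node L (QuotaBorrow k p j)"
  shows "node_val n x l (QuotaBorrow k p j) =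
    node_gate L (QuotaBorrow k p j) (map (node_val n x l) (node_args L n (QuotaBorrow k p j)))"
proof (cases j)
  case 0
  then show ?thesis by (simp add: copy_gate_def)
next
  case (Suc j')
  show ?thesis
  proof (cases "j \<le> k")
    case True
    then show ?thesis using Suc by (simp add: borrow_Suc)
  next
    case False
    then have "j' = k" "k = Suc (k - 1)" using assms Suc by simp_all
    then have "\<not> bit (block_count n x (k - 1) (2 * p)) k" using block_count_top_bit by metis
    then show ?thesis using Suc \<open>j' = k\<close> False by (simp add: borrow_Suc)
  qed
qed

lemma node_val_RightTop:
  assumes "is_node L (RightTop k p)"
  shows "node_val n x l (RightTop k p) =
    node_gate L (RightTop k p) (map (node_val n x l) (node_args L n (RightTop k p)))"
proof -
  have "k = Suc (k - 1)" using assms by simp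
  then have "\<not> bit (block_count n x (k - 1) (2 * p)) k" using block_count_top_bit by metis
  then show ?thesis by (simp add: bit_diff)
qed

lemma node_val_QuotaNZ:
  "node_val n x l (QuotaNZ k p j) =
    node_gate L (QuotaNZ k p j) (map (node_val n x l) (node_args L n (QuotaNZ k p j)))"
  by (cases j) (simp_all add: copy_gate_def mod_pow2_Suc_eq_0 del: power_Suc)

lemma node_val_QuotaPos:
  assumes "is_node L (QuotaPos k p)"
  shows "node_val n x l (QuotaPos k p) =
    node_gate L (QuotaPos k p) (map (node_val n x l) (node_args L n (QuotaPos k p)))"
proof -
  consider "k = L" | "k \<noteq> L" "even p" | "k \<noteq> L" "odd p" by blast
  then show ?thesis
  proof cases
    case 1
    then have "p = 0" using assms by simp
    have "(2::int) ^ L < 2 ^ (L + 1)" by simp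
    then have "int l < 2 ^ (L + 1)" using l_less by linarith
    then have "int l mod 2 ^ (L + 1) = int l" by (intro mod_pos_pos_trivial) auto
    then show ?thesis using 1 \<open>p = 0\<close> quota_root by (simp add: copy_gate_def)
  next
    case 2
    then obtain q where "p = 2 * q" by blast
    then show ?thesis using 2 by (simp add: copy_gate_def quota_left)
  next
    case 3
    then obtain q where q: "p = 2 * q + 1" using oddE by blast
    define Q c where "Q = quota n x l (Suc k) q" and "c = block_count n x k (2 * q)"
    have "0 \<le> c" "c \<le> 2 ^ k" using block_count_bounds unfolding c_def by auto
    note flags = diff_pos_iff_flags[OF this, of Q]
    have "quota n x l k p = Q - c" "p div 2 = q" using q quota_right unfolding Q_def c_def by simp_all
    then show ?thesis using 3 flags by (simp add: Q_def[symmetric] c_def[symmetric])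
  qed
qed

lemma node_val_QuotaBig:
  assumes "is_node L (QuotaBig k p)"
  shows "node_val n x l (QuotaBig k p) =
    node_gate L (QuotaBig k p) (map (node_val n x l) (node_args L n (QuotaBig k p)))"
proof -
  consider "k = L" | "k \<noteq> L" "even p" | "k \<noteq> L" "odd p" by blast
  then show ?thesis
  proof cases
    case 1
    then show ?thesis using assms quota_root l_less by (simp add: copy_gate_def)
  next
    case 2
    then obtain q where "p = 2 * q" by blast
    then show ?thesis using 2 gt_pow2_iff_flags[of k "quota n x l (Suc k) q"] by (simp add: quota_left)
  next
    case 3
    then obtain q where q: "p = 2 * q + 1" using oddE by blast
    define Q c where "Q = quota n x l (Suc k) q" and "c = block_count n x k (2 * q)"
    have "0 \<le> c" "c \<le> 2 ^ k" using block_count_bounds unfolding c_def by auto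
    note flags = diff_gt_pow2_iff_flags[OF this, of Q]
    have "quota n x l k p = Q - c" "p div 2 = q" using q quota_right unfolding Q_def c_def by simp_all
    then show ?thesis using 3 flags by (simp add: Q_def[symmetric] c_def[symmetric])
  qed
qed

lemma node_val_gate:
  "is_node L v \<Longrightarrow> node_val n x l v = node_gate L v (map (node_val n x l) (node_args L n v))"
  by (cases v) (simp_all only: node_val_CntBit node_val_CntCarry node_val_QuotaBit
      node_val_QuotaBorrow node_val_RightTop node_val_QuotaNZ node_val_QuotaPos node_val_QuotaBig,
      simp)

end

section \<open>Size and depth\<close>

lemma sum_pow2_weighted: "(\<Sum>k\<le>L. 2 ^ (L - k) * (k + 2 :: nat)) + L + 4 = 6 * 2 ^ L"
proof (induction L)
  case (Suc L)
  have "(\<Sum>k\<le>Suc L. 2 ^ (Suc L - k) * (k + 2 :: nat)) = 2 * (\<Sum>k\<le>L. 2 ^ (L - k) * (k + 2)) + (L + 3)"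
    by (simp add: sum_distrib_left Suc_diff_le mult.assoc)
  then show ?case using Suc by simp
qed simp

definition node_coords :: "nat \<Rightarrow> (nat \<times> nat \<times> nat) set" where
  "node_coords L = Sigma {..L} (\<lambda>k. {..<2 ^ (L - k)} \<times> {..k + 1})"

lemma card_node_coords: "card (node_coords L) \<le> 6 * 2 ^ L"
proof -
  have "card (node_coords L) = (\<Sum>k\<le>L. 2 ^ (L - k) * (k + 2))"
    unfolding node_coords_def by (simp add: card_cartesian_product)
  then show ?thesis using sum_pow2_weighted[of L] by linarith
qed

lemma finite_node_coords: "finite (node_coords L)"
  unfolding node_coords_def by auto

fun node_key :: "node \<Rightarrow> nat \<times> nat \<times> nat \<times> nat" where
  "node_key (Input i) = (0, i, 0, 0)"
| "node_key (CntBit k p j) = (1, k, p, j)"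
| "node_key (CntCarry k p j) = (2, k, p, j)"
| "node_key (QuotaBit k p j) = (3, k, p, j)"
| "node_key (QuotaBorrow k p j) = (4, k, p, j)"
| "node_key (RightTop k p) = (5, k, p, 0)"
| "node_key (QuotaNZ k p j) = (6, k, p, j)"
| "node_key (QuotaPos k p) = (7, k, p, 0)"
| "node_key (QuotaBig k p) = (8, k, p, 0)"

lemma inj_node_key: "inj node_key"
proof (rule injI)
  fix u v assume "node_key u = node_key v"
  then show "u = v" by (cases u; cases v) simp_all
qed

lemma node_key_mem: "is_node L v \<Longrightarrow> node_key v \<in> {1..8} \<times> node_coords L"
  by (cases v) (auto simp: node_coords_def)

lemma node_key_image: "node_key ` {v. is_node L v} \<subseteq> {1..8} \<times> node_coords L"
  using node_key_mem by blast

lemma finite_nodes: "finite {v. is_node L v}"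
  by (rule inj_on_finite[OF inj_on_subset[OF inj_node_key] node_key_image])
    (simp_all add: finite_node_coords)

lemma card_nodes: "card {v. is_node L v} \<le> 48 * 2 ^ L"
proof -
  have "card {v. is_node L v} \<le> card ({1..8::nat} \<times> node_coords L)"
    by (rule card_inj_on_le[OF inj_on_subset[OF inj_node_key] node_key_image])
      (simp_all add: finite_node_coords)
  also have "\<dots> \<le> 8 * (6 * 2 ^ L)"
    using card_node_coords[of L] by (simp add: card_cartesian_product)
  finally show ?thesis by simp
qed

definition b2u_gates :: "nat \<Rightarrow> node list" where
  "b2u_gates n = sort_key (node_level (nbits n)) (SOME xs. set xs = {v. is_node (nbits n) v} \<and> distinct xs)"

definition b2u_outputs :: "nat \<Rightarrow> node list" where
  "b2u_outputs n = map (QuotaPos 0) [0..<n]"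

definition b2u_circuit :: "nat \<Rightarrow> circuit" where
  "b2u_circuit n = compile_circuit (n + nbits n) Input (b2u_gates n) (node_args (nbits n) n)
     (node_gate (nbits n)) (b2u_outputs n)"

lemma b2u_gates: "set (b2u_gates n) = {v. is_node (nbits n) v}" "distinct (b2u_gates n)"
proof -
  have "\<exists>xs. set xs = {v. is_node (nbits n) v} \<and> distinct xs"
    using finite_distinct_list[OF finite_nodes] by blast
  then show "set (b2u_gates n) = {v. is_node (nbits n) v}" "distinct (b2u_gates n)"
    unfolding b2u_gates_def using someI_ex by (metis (mono_tags, lifting) distinct_sort set_sort)+
qed

lemma b2u_node_circuit:
  "node_circuit (n + nbits n) Input (b2u_gates n) (node_args (nbits n) n) (node_level (nbits n)) (b2u_outputs n)"
proof
  show "inj Input" by (rule injI) simp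
  show "distinct (b2u_gates n)" by (rule b2u_gates(2))
  show "\<And>i. Input i \<notin> set (b2u_gates n)" using b2u_gates(1) by simp
  show "sorted (map (node_level (nbits n)) (b2u_gates n))" unfolding b2u_gates_def by simp
  show "\<And>v u. v \<in> set (b2u_gates n) \<Longrightarrow> u \<in> set (node_args (nbits n) n v) \<Longrightarrow>
    node_level (nbits n) u < node_level (nbits n) v \<and> u \<in> set (b2u_gates n) \<union> Input ` {..<n + nbits n}"
    using node_args_below b2u_gates(1) by fastforce
  show "\<And>v. v \<in> set (b2u_gates n) \<Longrightarrow> 1 \<le> node_level (nbits n) v"
    using node_level_pos b2u_gates(1) by simp
  show "set (b2u_outputs n) \<subseteq> set (b2u_gates n) \<union> Input ` {..<n + nbits n}"
    using nbits_bounds(1)[of n] b2u_gates(1) unfolding b2u_outputs_def by auto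
qed


lemma b2u_circuit_wf: "wf_circuit (b2u_circuit n)"
  unfolding b2u_circuit_def by (rule node_circuit.circ_wf[OF b2u_node_circuit])

lemma b2u_circuit_size: "1 \<le> n \<Longrightarrow> size_c (b2u_circuit n) \<le> 96 * n"
proof -
  assume "1 \<le> n"
  then have "2 ^ nbits n \<le> 2 * n"
    using nbits_bounds(2) by (metis Suc_diff_1 less_le_trans mult_le_mono2 not_one_le_zero power_Suc zero_less_one)
  have "size_c (b2u_circuit n) = card {v. is_node (nbits n) v}"
    unfolding b2u_circuit_def using node_circuit.circ_size[OF b2u_node_circuit] b2u_gates distinct_card by metis
  also have "\<dots> \<le> 48 * 2 ^ nbits n" by (rule card_nodes)
  finally show ?thesis using \<open>2 ^ nbits n \<le> 2 * n\<close> by linarith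
qed

lemma b2u_circuit_depth: "depth_c (b2u_circuit n) \<le> 8 * nbits n + 6"
  unfolding b2u_circuit_def
  by (rule node_circuit.circ_depth_le[OF b2u_node_circuit]) (auto simp: b2u_outputs_def)

lemma b2u_circuit_fanin: "max_fanin (b2u_circuit n) 7"
  unfolding b2u_circuit_def
  by (rule node_circuit.circ_max_fanin[OF b2u_node_circuit]) (rule length_node_args)

lemma b2u_circuit_fanout: "max_fanout (b2u_circuit n) (7 * 7 + 1)"
  unfolding b2u_circuit_def
proof (rule node_circuit.circ_max_fanout[OF b2u_node_circuit])
  show "\<And>u v. v \<in> set (b2u_gates n) \<Longrightarrow> u \<in> set (node_args (nbits n) n v) \<Longrightarrow>
    v \<in> set (node_readers (nbits n) n u)"
    using node_readers_complete b2u_gates(1) by simp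
  show "distinct (b2u_outputs n)"
    unfolding b2u_outputs_def by (simp add: distinct_map inj_on_def)
qed (rule length_node_readers length_node_args)+

lemma b2u_circuit_solves: "solves_b2u n (b2u_circuit n)"
  unfolding solves_b2u_def Let_def
proof (intro conjI allI impI)
  show "c_inputs (b2u_circuit n) = n + nbits n" "length (c_outputs (b2u_circuit n)) = n"
    by (simp_all add: b2u_circuit_def compile_circuit_def b2u_outputs_def)
  fix x :: "bool list" and l i :: nat
  assume x: "length x = n" and l: "l \<le> n" and "i < n" "x ! i"
  have "eval_circuit (b2u_circuit n) (b2u_input n x l) = map (node_val n x l) (b2u_outputs n)"
    unfolding b2u_circuit_def
  proof (rule node_circuit.circ_eval[OF b2u_node_circuit])
    show "length (b2u_input n x l) = n + nbits n" unfolding b2u_input_def using x by simp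
    show "\<And>v. v \<in> set (b2u_gates n) \<Longrightarrow>
      node_val n x l v = node_gate (nbits n) v (map (node_val n x l) (node_args (nbits n) n v))"
      using node_val_gate[OF refl x l] b2u_gates(1) by simp
  qed simp
  then have "eval_circuit (b2u_circuit n) (b2u_input n x l) ! i = (0 < int l - prefix_count n x i)"
    using \<open>i < n\<close> by (simp add: b2u_outputs_def quota_def)
  also have "\<dots> \<longleftrightarrow> card {j. j < i \<and> x ! j} < l"
    using prefix_count_eq_card[OF x] \<open>i < n\<close> by simp
  finally show "eval_circuit (b2u_circuit n) (b2u_input n x l) ! i \<longleftrightarrow> card {j. j < i \<and> x ! j} < l" .
qed

theorem mainTheorem10:
  shows "\<exists>(c::nat) (a::real) (b::real). \<forall>n::nat. n \<ge> 1 \<longrightarrow>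
    (\<exists>C. wf_circuit C \<and> max_fanin C c \<and> max_fanout C c \<and>
         real (size_c C) \<le> a * real n \<and>
         real (depth_c C) \<le> b * (1 + log 2 (real n)) \<and>
         solves_b2u n C)"
proof (rule exI[of _ 50], rule exI[of _ 96], rule exI[of _ 14], intro allI impI)
  fix n :: nat assume n: "1 \<le> n"
  have "real (nbits n - 1) \<le> log 2 (real n)"
    using nbits_bounds(2)[OF n] le_log2_of_power by blast
  then have "real (depth_c (b2u_circuit n)) \<le> 14 * (1 + log 2 (real n))"
    using b2u_circuit_depth[of n] nbits_bounds(2)[OF n] n by (simp add: of_nat_diff)
  moreover have "real (size_c (b2u_circuit n)) \<le> 96 * real n"
    using b2u_circuit_size[OF n] by (simp add: of_nat_le_iff[symmetric, where 'a = real])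
  moreover have "max_fanin (b2u_circuit n) 50"
    using b2u_circuit_fanin unfolding max_fanin_def by force
  ultimately show "\<exists>C. wf_circuit C \<and> max_fanin C 50 \<and> max_fanout C 50 \<and>
      real (size_c C) \<le> 96 * real n \<and> real (depth_c C) \<le> 14 * (1 + log 2 (real n)) \<and> solves_b2u n C"
    using b2u_circuit_wf b2u_circuit_fanout b2u_circuit_solves by auto
qed

end
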